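(* Let $p$ be a prime and $n$ an integer with $p>n\ge2$, let $q$ be a power of $p$, and let $\mathrm{disc}_n\in\mathbb{F}_q[a_0,\dots,a_n]$ be the generic discriminant of $\sum_{0\le i\le n}a_ix^i$. Then there is no nonzero $u\in\mathbb{F}_q^{n+1}$ with $\mathrm{disc}_n(a_0-u_0,\dots,a_n-u_n)=\mathrm{disc}_n(a_0,\dots,a_n)$; i.e. $\mathrm{disc}_n$ is not shift-invariant.
   Context: The generic discriminant $\mathrm{disc}_n$ is the reduction modulo $p$ of the integer polynomial in $a_0,\dots,a_n$ equal to $(-1)^{n(n-1)/2}a_n^{-1}\mathrm{Res}(f,f')$ for $f=\sum_{i}a_ix^i$ (equivalently $a_n^{2n-2}\prod_{i<j}(\alpha_i-\alpha_j)^2$ with $\alpha_i$ the roots of $f$); it is absolutely irreducible of degree $2n-2$ and its zero set is the hypersurface of non-squarefree polynomials. *)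

theory Defs
  imports "HOL-Library.Poly_Mapping" "HOL-Computational_Algebra.Polynomial"
    "Subresultants.Resultant_Prelim"
begin

text \<open>Multivariate polynomials over 'a in the variables a_0, a_1, ... (indexed by nat):
  finitely supported maps from monomials (exponent vectors) to coefficients.\<close>
type_synonym 'a mpoly = "(nat \<Rightarrow>\<^sub>0 nat) \<Rightarrow>\<^sub>0 'a"

definition mvar :: "nat \<Rightarrow> 'a::comm_semiring_1 mpoly" where
  "mvar i = Poly_Mapping.single (Poly_Mapping.single i 1) 1"

definition mconst :: "'a::comm_semiring_1 \<Rightarrow> 'a mpoly" where
  "mconst c = Poly_Mapping.single 0 c"

definition msubst :: "(nat \<Rightarrow> 'a::comm_semiring_1 mpoly) \<Rightarrow> 'a mpoly \<Rightarrow> 'a mpoly" where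
  "msubst \<sigma> P = (\<Sum>m\<in>Poly_Mapping.keys P.
      mconst (Poly_Mapping.lookup P m) * (\<Prod>i\<in>Poly_Mapping.keys m. \<sigma> i ^ Poly_Mapping.lookup m i))"

definition gen_poly :: "nat \<Rightarrow> (nat \<Rightarrow> 'b::comm_semiring_1) \<Rightarrow> 'b poly" where
  "gen_poly n c = (\<Sum>i\<le>n. monom (c i) i)"

definition generic_disc :: "nat \<Rightarrow> 'a::idom mpoly" where
  "generic_disc n = (THE d. mvar n * d =
      (-1) ^ (n * (n - 1) div 2) * resultant (gen_poly n mvar) (pderiv (gen_poly n mvar)))"

end

theory Submission
  imports Defs "Subresultants.More_Homomorphisms"
begin

text \<open>If the discriminant were invariant under the shift \<open>a\<^sub>i \<mapsto> a\<^sub>i - u\<^sub>i\<close>, then, because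
  \<open>a\<^sub>n disc = \<plusminus>Res(f, f')\<close>, every polynomial \<open>P\<close> of degree \<open>n\<close> over \<open>\<bbbF>\<^sub>q[t]\<close> and its shift
  \<open>Q = P - \<Sum>\<^sub>i u\<^sub>i X\<^sup>i\<close> would have vanishing and nonvanishing resultants \<open>Res(P, P')\<close>,
  \<open>Res(Q, Q')\<close> together. With \<open>g = \<Sum>\<^sub>i u\<^sub>i t\<^sup>i \<noteq> 0\<close> take \<open>P = a (X - r)\<^sup>n + b\<close>: its resultant
  is nonzero because \<open>n P - (X - r) P' = n b\<close> is a nonzero constant, and \<open>a, b, r\<close> can be chosen
  so that \<open>P\<close> agrees with \<open>\<Sum>\<^sub>i u\<^sub>i X\<^sup>i\<close> to first order at \<open>X = t\<close> (if \<open>g' \<noteq> 0\<close>: \<open>r = t - 1\<close>,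
  \<open>a = g'/n\<close>, \<open>b = g - a\<close>; if \<open>g' = 0\<close>: \<open>r = t\<close>, \<open>a = t\<close>, \<open>b = g\<close>). Then \<open>Q\<close> has the double
  root \<open>t\<close>, so \<open>Res(Q, Q') = 0\<close>.\<close>

section \<open>Evaluation of multivariate polynomials\<close>

definition monomial_eval :: "(nat \<Rightarrow> 'b::comm_semiring_1) \<Rightarrow> (nat \<Rightarrow>\<^sub>0 nat) \<Rightarrow> 'b" where
  "monomial_eval x m = (\<Prod>i\<in>Poly_Mapping.keys m. x i ^ Poly_Mapping.lookup m i)"

lemma monomial_eval_superset:
  assumes "finite S" "Poly_Mapping.keys m \<subseteq> S"
  shows "monomial_eval x m = (\<Prod>i\<in>S. x i ^ Poly_Mapping.lookup m i)"
  unfolding monomial_eval_def using assms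
  by (intro prod.mono_neutral_left) (auto simp: in_keys_iff)

lemma monomial_eval_0 [simp]: "monomial_eval x 0 = 1"
  by (simp add: monomial_eval_def)

lemma monomial_eval_single [simp]: "monomial_eval x (Poly_Mapping.single i k) = x i ^ k"
  by (cases "k = 0") (simp_all add: monomial_eval_def)

lemma monomial_eval_add: "monomial_eval x (m + m') = monomial_eval x m * monomial_eval x m'"
proof -
  let ?S = "Poly_Mapping.keys m \<union> Poly_Mapping.keys m'"
  have "monomial_eval x (m + m') = (\<Prod>i\<in>?S. x i ^ Poly_Mapping.lookup (m + m') i)"
    by (rule monomial_eval_superset) (auto simp: keys_add)
  also have "\<dots> = (\<Prod>i\<in>?S. x i ^ Poly_Mapping.lookup m i) * (\<Prod>i\<in>?S. x i ^ Poly_Mapping.lookup m' i)"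
    by (simp add: lookup_add power_add prod.distrib)
  also have "\<dots> = monomial_eval x m * monomial_eval x m'"
    by (simp add: monomial_eval_superset[symmetric])
  finally show ?thesis .
qed

lemma poly_mapping_sum_single:
  "P = (\<Sum>m\<in>Poly_Mapping.keys P. Poly_Mapping.single m (Poly_Mapping.lookup P m))"
  by (rule poly_mapping_eqI) (simp add: lookup_sum lookup_single when_def in_keys_iff)

definition mpoly_eval :: "('a::comm_semiring_1 \<Rightarrow> 'b::comm_semiring_1) \<Rightarrow> (nat \<Rightarrow> 'b) \<Rightarrow> 'a mpoly \<Rightarrow> 'b"
  where "mpoly_eval \<phi> x P =
    (\<Sum>m\<in>Poly_Mapping.keys P. \<phi> (Poly_Mapping.lookup P m) * monomial_eval x m)"

context comm_semiring_hom
begin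

lemma mpoly_eval_superset:
  assumes "finite S" "Poly_Mapping.keys P \<subseteq> S"
  shows "mpoly_eval hom x P = (\<Sum>m\<in>S. hom (Poly_Mapping.lookup P m) * monomial_eval x m)"
  unfolding mpoly_eval_def using assms
  by (intro sum.mono_neutral_left) (auto simp: in_keys_iff)

lemma mpoly_eval_0 [simp]: "mpoly_eval hom x 0 = 0"
  by (simp add: mpoly_eval_def)

lemma mpoly_eval_single [simp]:
  "mpoly_eval hom x (Poly_Mapping.single m a) = hom a * monomial_eval x m"
  by (simp add: mpoly_eval_def)

lemma mpoly_eval_add: "mpoly_eval hom x (P + Q) = mpoly_eval hom x P + mpoly_eval hom x Q"
proof -
  let ?S = "Poly_Mapping.keys P \<union> Poly_Mapping.keys Q"
  have "mpoly_eval hom x (P + Q) =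
      (\<Sum>m\<in>?S. hom (Poly_Mapping.lookup (P + Q) m) * monomial_eval x m)"
    by (rule mpoly_eval_superset) (auto simp: keys_add)
  also have "\<dots> = (\<Sum>m\<in>?S. hom (Poly_Mapping.lookup P m) * monomial_eval x m) +
      (\<Sum>m\<in>?S. hom (Poly_Mapping.lookup Q m) * monomial_eval x m)"
    by (simp add: lookup_add hom_add distrib_right sum.distrib)
  also have "\<dots> = mpoly_eval hom x P + mpoly_eval hom x Q"
    by (simp add: mpoly_eval_superset[symmetric])
  finally show ?thesis .
qed

lemma mpoly_eval_sum: "mpoly_eval hom x (sum f A) = (\<Sum>a\<in>A. mpoly_eval hom x (f a))"
  by (induction A rule: infinite_finite_induct) (simp_all add: mpoly_eval_add)

lemma mpoly_eval_mult: "mpoly_eval hom x (P * Q) = mpoly_eval hom x P * mpoly_eval hom x Q"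
proof -
  let ?c = "Poly_Mapping.lookup"
  have "P * Q = (\<Sum>m\<in>Poly_Mapping.keys P. \<Sum>m'\<in>Poly_Mapping.keys Q.
      Poly_Mapping.single (m + m') (?c P m * ?c Q m'))"
    by (subst poly_mapping_sum_single[of P], subst poly_mapping_sum_single[of Q])
      (simp add: sum_distrib_left sum_distrib_right mult_single sum.swap[of _ "Poly_Mapping.keys Q"])
  then have "mpoly_eval hom x (P * Q) = (\<Sum>m\<in>Poly_Mapping.keys P. \<Sum>m'\<in>Poly_Mapping.keys Q.
      hom (?c P m) * monomial_eval x m * (hom (?c Q m') * monomial_eval x m'))"
    by (simp add: mpoly_eval_sum monomial_eval_add hom_mult mult_ac)
  also have "\<dots> = mpoly_eval hom x P * mpoly_eval hom x Q"
    by (simp add: mpoly_eval_def sum_product)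
  finally show ?thesis .
qed

lemma mpoly_eval_one: "mpoly_eval hom x 1 = 1"
  by (simp flip: single_one)

lemma mpoly_eval_mvar [simp]: "mpoly_eval hom x (mvar i) = x i"
  by (simp add: mvar_def)

lemma mpoly_eval_mconst [simp]: "mpoly_eval hom x (mconst a) = hom a"
  by (simp add: mconst_def)

lemma comm_semiring_hom_mpoly_eval: "comm_semiring_hom (mpoly_eval hom x)"
  by unfold_locales (simp_all add: mpoly_eval_add mpoly_eval_mult mpoly_eval_one)

lemma mpoly_eval_msubst:
  "mpoly_eval hom x (msubst \<sigma> P) = mpoly_eval hom (\<lambda>i. mpoly_eval hom x (\<sigma> i)) P"
proof -
  interpret eval: comm_semiring_hom "mpoly_eval hom x"
    by (rule comm_semiring_hom_mpoly_eval)
  show ?thesis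
    by (simp add: msubst_def mpoly_eval_def[of _ _ P] monomial_eval_def
        eval.hom_sum eval.hom_mult eval.hom_prod eval.hom_power)
qed

end

lemma (in idom_hom) idom_hom_mpoly_eval: "idom_hom (mpoly_eval hom x)"
  by unfold_locales (simp_all add: mpoly_eval_add mpoly_eval_mult mpoly_eval_one)

section \<open>Resultants, common roots and Bezout identities\<close>

text \<open>Row \<open>i\<close> of the Sylvester matrix, read as the coefficient list of a polynomial of degree
  at most \<open>degree p + degree q\<close>, highest degree first.\<close>

definition sylvester_row :: "'a::comm_semiring_1 poly \<Rightarrow> 'a poly \<Rightarrow> nat \<Rightarrow> 'a poly" where
  "sylvester_row p q i = (if i < degree q then monom 1 (degree q - i) * p
     else monom 1 (degree p + degree q - i) * q)"

lemma sylvester_mat_index_row: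
  assumes "i < degree p + degree q" "j < degree p + degree q"
  shows "sylvester_mat p q $$ (i, j) = coeff (sylvester_row p q i) (degree p + degree q - j)"
  unfolding sylvester_row_def using assms by (subst sylvester_index_mat2) auto

lemma coeff_0_sylvester_row: "i < degree p + degree q \<Longrightarrow> coeff (sylvester_row p q i) 0 = 0"
  unfolding sylvester_row_def by (auto simp: coeff_monom_mult)

lemma degree_sylvester_row_le:
  assumes "i < degree p + degree q"
  shows "degree (sylvester_row p q i) \<le> degree p + degree q"
proof -
  have "degree (monom 1 e * f) \<le> e + degree f" for e and f :: "'a poly"
    by (rule order.trans[OF degree_mult_le]) (simp add: degree_monom_le add_right_mono)
  from this[of "degree q - i" p] this[of "degree p + degree q - i" q] assms show ?thesis
    unfolding sylvester_row_def by auto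
qed

lemma poly_eq_sum_rev:
  fixes f :: "'a::comm_ring_1 poly"
  assumes "degree f \<le> N" "coeff f 0 = 0"
  shows "poly f r = (\<Sum>j<N. coeff f (N - j) * r ^ (N - j))"
proof -
  have "poly f r = (\<Sum>d<Suc N. coeff f d * r ^ d)"
    unfolding poly_altdef using assms(1)
    by (intro sum.mono_neutral_left) (auto simp: coeff_eq_0)
  also have "\<dots> = (\<Sum>i<N. coeff f (Suc i) * r ^ Suc i)"
    by (subst sum.lessThan_Suc_shift) (simp add: assms(2))
  also have "\<dots> = (\<Sum>j<N. coeff f (N - j) * r ^ (N - j))"
    using sum.atLeastLessThan_rev[of "\<lambda>i. coeff f (Suc i) * r ^ Suc i" 0 N]
    by (simp add: lessThan_atLeast0 Suc_diff_Suc)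
  finally show ?thesis .
qed

text \<open>A nonzero common root \<open>r\<close> gives the kernel vector \<open>(r\<^sup>N, \<dots>, r)\<close> of the Sylvester matrix.\<close>

lemma resultant_eq_0_if_common_root:
  fixes p q :: "'a::idom poly"
  assumes "poly p r = 0" "poly q r = 0" "r \<noteq> 0" "0 < degree p + degree q"
  shows "resultant p q = 0"
proof -
  define N where "N = degree p + degree q"
  define S where "S = sylvester_mat p q"
  have S: "S \<in> carrier_mat N N"
    unfolding S_def N_def by (rule sylvester_carrier_mat)
  define v where "v = vec N (\<lambda>j. r ^ (N - j))"
  have v: "v \<in> carrier_vec N"
    by (simp add: v_def)
  have "v $ 0 \<noteq> 0"
    using assms(3,4) unfolding v_def N_def by simp
  then have "v \<noteq> 0\<^sub>v N"
    using assms(4) unfolding N_def by auto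
  moreover have "S *\<^sub>v v = 0\<^sub>v N"
  proof (rule eq_vecI)
    fix i assume "i < dim_vec (0\<^sub>v N :: 'a vec)"
    then have i: "i < N"
      by simp
    have "(S *\<^sub>v v) $ i = (\<Sum>j<N. coeff (sylvester_row p q i) (N - j) * r ^ (N - j))"
      using S i by (auto simp: v_def S_def N_def scalar_prod_def sylvester_mat_index_row
          lessThan_atLeast0 intro!: sum.cong)
    also have "\<dots> = poly (sylvester_row p q i) r"
      using i unfolding N_def
      by (intro poly_eq_sum_rev[symmetric] degree_sylvester_row_le coeff_0_sylvester_row)
    also have "\<dots> = 0"
      using assms(1,2) unfolding sylvester_row_def by simp
    finally show "(S *\<^sub>v v) $ i = 0\<^sub>v N $ i"
      using i by simp
  qed (use S in simp)
  ultimately have "det S = 0"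
    using det_0_iff_vec_prod_zero[OF S] v by blast
  then show ?thesis
    unfolding resultant_def S_def .
qed

definition reversed_poly :: "(nat \<Rightarrow> 'a::comm_semiring_1) \<Rightarrow> nat \<Rightarrow> nat \<Rightarrow> 'a poly" where
  "reversed_poly w a b = (\<Sum>i\<in>{a..<b}. monom (w i) (b - 1 - i))"

lemma coeff_reversed_poly:
  assumes "a \<le> i" "i < b"
  shows "coeff (reversed_poly w a b) (b - 1 - i) = w i"
proof -
  have "coeff (reversed_poly w a b) (b - 1 - i) = (\<Sum>i'\<in>{a..<b}. if i' = i then w i' else 0)"
    unfolding reversed_poly_def coeff_sum using assms by (intro sum.cong) (auto simp: coeff_monom)
  also have "\<dots> = w i"
    using assms by (simp add: sum.delta)
  finally show ?thesis .
qed

lemma degree_reversed_poly_le: "degree (reversed_poly w a b) \<le> b - 1"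
  unfolding reversed_poly_def by (intro degree_sum_le) (auto intro: order.trans[OF degree_monom_le])

lemma sylvester_left_kernel_relation:
  fixes p q :: "'a::comm_ring_1 poly"
  defines "N \<equiv> degree p + degree q"
  assumes w: "w \<in> carrier_vec N" "transpose_mat (sylvester_mat p q) *\<^sub>v w = 0\<^sub>v N"
  shows "reversed_poly (($) w) 0 (degree q) * p + reversed_poly (($) w) (degree q) N * q = 0"
proof -
  define H where "H = (\<Sum>i<N. smult (w $ i) (sylvester_row p q i))"
  have "H = 0"
  proof (rule poly_eqI)
    fix d
    show "coeff H d = coeff 0 d"
    proof (cases "d = 0 \<or> N < d")
      case True
      then have "coeff (sylvester_row p q i) d = 0" if "i < N" for i
        using that coeff_0_sylvester_row degree_sylvester_row_le unfolding N_def
        by (metis coeff_eq_0 le_less_trans)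
      then show ?thesis
        by (simp add: H_def coeff_sum)
    next
      case False
      then have j: "N - d < N" "d = N - (N - d)"
        by auto
      have "0 = (transpose_mat (sylvester_mat p q) *\<^sub>v w) $ (N - d)"
        using w(2) j by simp
      also have "\<dots> = (\<Sum>i<N. w $ i * coeff (sylvester_row p q i) d)"
        using j w(1) unfolding N_def
        by (auto simp: scalar_prod_def lessThan_atLeast0 sylvester_mat_index_row mult.commute
            intro!: sum.cong)
      finally show ?thesis
        by (simp add: H_def coeff_sum)
    qed
  qed
  have shift: "smult c (monom 1 (e - i) * f) = monom 1 1 * (monom c (e - 1 - i) * f)"
    if "i < e" for c e i and f :: "'a poly"
    using that by (simp add: smult_monom mult_monom Suc_diff_Suc flip: mult.assoc mult_smult_left)
  have row: "smult (w $ i) (sylvester_row p q i) =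
      monom 1 1 * (monom (w $ i) (degree q - 1 - i) * p)" if "i < degree q" for i
    using that shift by (simp add: sylvester_row_def)
  have row': "smult (w $ i) (sylvester_row p q i) = monom 1 1 * (monom (w $ i) (N - 1 - i) * q)"
    if "degree q \<le> i" "i < N" for i
    using that shift by (simp add: sylvester_row_def N_def)
  have "H = (\<Sum>i\<in>{0..<degree q}. smult (w $ i) (sylvester_row p q i)) +
      (\<Sum>i\<in>{degree q..<N}. smult (w $ i) (sylvester_row p q i))"
    unfolding H_def lessThan_atLeast0 N_def by (simp add: sum.atLeastLessThan_concat)
  also have "\<dots> = monom 1 1 * (reversed_poly (($) w) 0 (degree q) * p +
      reversed_poly (($) w) (degree q) N * q)"
    unfolding reversed_poly_def distrib_left sum_distrib_left sum_distrib_right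
    by (intro arg_cong2[where f = "(+)"] sum.cong refl) (simp_all add: row row')
  finally show ?thesis
    using \<open>H = 0\<close> by (simp add: monom_Suc)
qed

lemma resultant_neq_0_if_bezout:
  fixes p q :: "'a::idom poly"
  assumes bezout: "s * p + t * q = [:c:]" and "c \<noteq> 0" and "0 < degree q"
  shows "resultant p q \<noteq> 0"
proof
  assume "resultant p q = 0"
  define N where "N = degree p + degree q"
  define S where "S = sylvester_mat p q"
  have S: "S \<in> carrier_mat N N"
    unfolding S_def N_def by (rule sylvester_carrier_mat)
  have "det (transpose_mat S) = 0"
    using \<open>resultant p q = 0\<close> det_transpose[OF S] unfolding resultant_def S_def by simp
  then obtain w where w: "w \<in> carrier_vec N" "w \<noteq> 0\<^sub>v N" "transpose_mat S *\<^sub>v w = 0\<^sub>v N"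
    using det_0_iff_vec_prod_zero[of "transpose_mat S" N] S by auto
  define A where "A = reversed_poly (($) w) 0 (degree q)"
  define B where "B = reversed_poly (($) w) (degree q) N"
  have AB: "A * p + B * q = 0"
    using sylvester_left_kernel_relation[of w p q] w unfolding A_def B_def N_def S_def by simp
  have "smult c A = A * (s * p + t * q)"
    by (simp add: bezout)
  also have "\<dots> = s * (A * p + B * q) + q * (t * A - s * B)"
    by (simp add: algebra_simps)
  finally have "q dvd smult c A"
    using AB by simp
  have "A = 0"
  proof (rule ccontr)
    assume "A \<noteq> 0"
    with \<open>q dvd smult c A\<close> \<open>c \<noteq> 0\<close> have "degree q \<le> degree A"
      by (metis degree_smult_eq dvd_imp_degree_le smult_eq_0_iff)
    moreover have "degree A \<le> degree q - 1"
      unfolding A_def by (rule degree_reversed_poly_le)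
    ultimately show False
      using assms(3) by simp
  qed
  with AB assms(3) have "B = 0"
    by auto
  have "w = 0\<^sub>v N"
  proof (rule eq_vecI)
    fix i assume "i < dim_vec (0\<^sub>v N :: 'a vec)"
    then show "w $ i = 0\<^sub>v N $ i"
      using \<open>A = 0\<close> \<open>B = 0\<close> coeff_reversed_poly[of 0 i "degree q" "($) w"]
        coeff_reversed_poly[of "degree q" i N "($) w"]
      by (cases "i < degree q") (auto simp: A_def B_def)
  qed (use w(1) in simp)
  with w(2) show False
    by contradiction
qed

lemma dvd_resultant_if_dvd_lead_coeffs:
  fixes p q :: "'a::comm_ring_1 poly"
  assumes "d dvd lead_coeff p" "d dvd lead_coeff q" "0 < degree p + degree q"
  shows "d dvd resultant p q"
proof -
  define N where "N = degree p + degree q"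
  define S where "S = sylvester_mat p q"
  have S: "S \<in> carrier_mat N N"
    unfolding S_def N_def by (rule sylvester_carrier_mat)
  have "resultant p q = (\<Sum>i<N. S $$ (i, 0) * cofactor S i 0)"
    unfolding resultant_def S_def[symmetric]
    by (rule laplace_expansion_column[OF S]) (use assms(3) N_def in simp)
  also have "d dvd \<dots>"
  proof (rule dvd_sum)
    fix i assume "i \<in> {..<N}"
    text \<open>The first column of the Sylvester matrix holds only the two leading coefficients.\<close>
    then have "d dvd S $$ (i, 0)"
      using assms unfolding S_def N_def by (subst sylvester_index_mat) auto
    then show "d dvd S $$ (i, 0) * cofactor S i 0"
      by simp
  qed
  finally show ?thesis .
qed

section \<open>The generic polynomial and its discriminant\<close>

lemma coeff_gen_poly: "coeff (gen_poly n c) i = (if i \<le> n then c i else 0)"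
  unfolding gen_poly_def coeff_sum coeff_monom by (simp add: sum.delta)

lemma degree_gen_poly_le: "degree (gen_poly n c) \<le> n"
  by (rule degree_le) (simp add: coeff_gen_poly)

lemma degree_gen_poly: "c n \<noteq> 0 \<Longrightarrow> degree (gen_poly n c) = n"
  by (intro antisym degree_gen_poly_le le_degree) (simp add: coeff_gen_poly)

lemma gen_poly_coeff: "degree p \<le> n \<Longrightarrow> gen_poly n (coeff p) = p"
  by (rule poly_eqI) (auto simp: coeff_gen_poly coeff_eq_0)

lemma gen_poly_diff: "gen_poly n (\<lambda>i. c i - d i) = gen_poly n c - gen_poly n d"
  by (rule poly_eqI) (simp add: coeff_gen_poly)

lemma map_poly_gen_poly: "f 0 = 0 \<Longrightarrow> map_poly f (gen_poly n c) = gen_poly n (\<lambda>i. f (c i))"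
  by (rule poly_eqI) (simp add: coeff_map_poly coeff_gen_poly)

lemma degree_pderiv_eq:
  fixes f :: "'a::idom poly"
  assumes "degree f = n" "of_nat n * coeff f n \<noteq> 0"
  shows "degree (pderiv f) = n - 1"
proof (intro antisym degree_le le_degree allI impI)
  show "coeff (pderiv f) (n - 1) \<noteq> 0"
    using assms by (cases n) (simp_all add: coeff_pderiv)
next
  fix i assume "n - 1 < i"
  then show "coeff (pderiv f) i = 0"
    using assms by (simp add: coeff_pderiv coeff_eq_0)
qed

lemma mvar_neq_0 [simp]: "mvar i \<noteq> (0::'a::comm_semiring_1 mpoly)"
proof
  assume "mvar i = (0::'a mpoly)"
  then have "Poly_Mapping.lookup (mvar i :: 'a mpoly) (Poly_Mapping.single i 1) = 0"
    by simp
  then show False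
    by (simp add: mvar_def)
qed

lemma of_nat_mpoly_neq_0: "of_nat n \<noteq> (0::'a::comm_semiring_1) \<Longrightarrow> of_nat n \<noteq> (0::'a mpoly)"
proof
  assume "of_nat n \<noteq> (0::'a)" "of_nat n = (0::'a mpoly)"
  then have "Poly_Mapping.lookup (of_nat n :: 'a mpoly) 0 = 0"
    by simp
  with \<open>of_nat n \<noteq> (0::'a)\<close> show False
    by (simp add: lookup_of_nat)
qed

lemma
  fixes n :: nat
  assumes "of_nat n \<noteq> (0::'a::idom)"
  shows degree_gen_poly_mvar: "degree (gen_poly n mvar :: 'a mpoly poly) = n"
    and degree_pderiv_gen_poly_mvar: "degree (pderiv (gen_poly n mvar :: 'a mpoly poly)) = n - 1"
    and lead_coeff_pderiv_gen_poly_mvar: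
      "lead_coeff (pderiv (gen_poly n mvar :: 'a mpoly poly)) = of_nat n * mvar n"
proof -
  have "n \<noteq> 0"
    using assms by (metis of_nat_0)
  show deg: "degree (gen_poly n mvar :: 'a mpoly poly) = n"
    by (simp add: degree_gen_poly)
  have "of_nat n * coeff (gen_poly n mvar :: 'a mpoly poly) n \<noteq> 0"
    using of_nat_mpoly_neq_0[OF assms] by (simp add: coeff_gen_poly)
  then show deg': "degree (pderiv (gen_poly n mvar :: 'a mpoly poly)) = n - 1"
    by (rule degree_pderiv_eq[OF deg])
  show "lead_coeff (pderiv (gen_poly n mvar :: 'a mpoly poly)) = of_nat n * mvar n"
    using \<open>n \<noteq> 0\<close> by (simp add: deg' coeff_pderiv coeff_gen_poly)
qed

lemma mvar_mult_generic_disc: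
  assumes "of_nat n \<noteq> (0::'a::idom)"
  shows "mvar n * (generic_disc n :: 'a mpoly) =
    (-1) ^ (n * (n - 1) div 2) * resultant (gen_poly n mvar) (pderiv (gen_poly n mvar))"
proof -
  let ?R = "(-1) ^ (n * (n - 1) div 2) *
    resultant (gen_poly n mvar) (pderiv (gen_poly n mvar)) :: 'a mpoly"
  have "n \<noteq> 0"
    using assms by (metis of_nat_0)
  have "mvar n dvd resultant (gen_poly n mvar) (pderiv (gen_poly n mvar) :: 'a mpoly poly)"
    using assms \<open>n \<noteq> 0\<close>
    by (intro dvd_resultant_if_dvd_lead_coeffs)
      (simp_all add: degree_gen_poly_mvar lead_coeff_pderiv_gen_poly_mvar coeff_gen_poly)
  then obtain d where "?R = mvar n * d"
    by (auto elim!: dvdE)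
  then have "\<exists>!d. mvar n * d = ?R"
    by auto
  from theI'[OF this] show ?thesis
    unfolding generic_disc_def .
qed

lemma (in idom_hom) mpoly_eval_generic_disc:
  assumes "of_nat n \<noteq> (0::'a)" and "of_nat n * x n \<noteq> (0::'b)"
  shows "x n * mpoly_eval hom x (generic_disc n) =
    (-1) ^ (n * (n - 1) div 2) * resultant (gen_poly n x) (pderiv (gen_poly n x))"
proof -
  interpret eval: idom_hom "mpoly_eval hom x"
    by (rule idom_hom_mpoly_eval)
  have map: "map_poly (mpoly_eval hom x) (gen_poly n mvar) = gen_poly n x"
    by (simp add: map_poly_gen_poly)
  have "x n \<noteq> 0"
    using assms(2) by auto
  then have deg: "degree (gen_poly n x) = n"
    by (rule degree_gen_poly)
  have "degree (pderiv (gen_poly n x)) = n - 1"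
    using assms(2) by (intro degree_pderiv_eq[OF deg]) (simp add: coeff_gen_poly)
  then have "resultant (gen_poly n x) (pderiv (gen_poly n x)) =
      mpoly_eval hom x (resultant (gen_poly n mvar) (pderiv (gen_poly n mvar)))"
    using eval.resultant_map_poly[of "gen_poly n mvar" "pderiv (gen_poly n mvar)"] assms(1) deg
    by (simp add: map eval.map_poly_pderiv degree_gen_poly_mvar degree_pderiv_gen_poly_mvar)
  moreover have "x n * mpoly_eval hom x (generic_disc n) =
      mpoly_eval hom x (mvar n * generic_disc n)"
    by (simp add: eval.hom_mult)
  ultimately show ?thesis
    using assms(1) by (simp add: mvar_mult_generic_disc eval.hom_mult eval.hom_power eval.hom_uminus)
qed

lemma (in idom_hom) msubst_shift_generic_disc_neq:
  fixes P :: "'b poly"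
  assumes "of_nat n \<noteq> (0::'a)" "of_nat n \<noteq> (0::'b)"
    and "degree P \<le> n" "coeff P n \<noteq> 0" "coeff P n \<noteq> hom (u n)"
    and "resultant P (pderiv P) \<noteq> 0"
    and "resultant (P - gen_poly n (\<lambda>i. hom (u i))) (pderiv (P - gen_poly n (\<lambda>i. hom (u i)))) = 0"
  shows "msubst (\<lambda>i. mvar i - mconst (u i)) (generic_disc n) \<noteq> generic_disc n"
proof
  assume shift: "msubst (\<lambda>i. mvar i - mconst (u i)) (generic_disc n) = generic_disc n"
  interpret eval: idom_hom "mpoly_eval hom (coeff P)"
    by (rule idom_hom_mpoly_eval)
  define x' where "x' = (\<lambda>i. coeff P i - hom (u i))"
  have "gen_poly n x' = P - gen_poly n (\<lambda>i. hom (u i))"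
    using assms(3) by (simp add: x'_def gen_poly_diff gen_poly_coeff)
  then have "x' n * mpoly_eval hom x' (generic_disc n) = 0"
    using mpoly_eval_generic_disc[of n x'] assms(1,2,4,5,7) by (simp add: x'_def)
  then have "mpoly_eval hom x' (generic_disc n) = 0"
    using assms(5) by (simp add: x'_def)
  moreover have "mpoly_eval hom x' (generic_disc n) = mpoly_eval hom (coeff P) (generic_disc n)"
    using arg_cong[OF shift, of "mpoly_eval hom (coeff P)"]
    by (simp add: mpoly_eval_msubst eval.hom_minus x'_def)
  moreover have "coeff P n * mpoly_eval hom (coeff P) (generic_disc n) \<noteq> 0"
    using mpoly_eval_generic_disc[of n "coeff P"] assms(1-4,6) by (simp add: gen_poly_coeff)
  ultimately show False
    by simp
qed

section \<open>A separable polynomial with an inseparable shift\<close>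

lemma pderiv_binomial:
  "pderiv (smult a ([:-r, 1:] ^ n) + [:b:]) = smult (of_nat n * a) ([:-r, 1:] ^ (n - 1))"
  by (simp add: pderiv_add pderiv_smult pderiv_power pderiv_pCons mult.commute)

lemma resultant_pderiv_binomial_neq_0:
  fixes a b r :: "'a::idom"
  assumes "2 \<le> n" "of_nat n \<noteq> (0::'a)" "a \<noteq> 0" "b \<noteq> 0"
  shows "resultant (smult a ([:-r, 1:] ^ n) + [:b:]) (pderiv (smult a ([:-r, 1:] ^ n) + [:b:])) \<noteq> 0"
proof (rule resultant_neq_0_if_bezout)
  let ?X = "[:-r, 1:]"
  have "?X * ?X ^ (n - 1) = ?X ^ n"
    using assms(1) by (simp flip: power_Suc)
  then have X: "?X * pderiv (smult a (?X ^ n) + [:b:]) = smult (of_nat n * a) (?X ^ n)"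
    unfolding pderiv_binomial mult_smult_right by (rule arg_cong)
  have n: "[:of_nat n:] * (smult a (?X ^ n) + [:b:]) = smult (of_nat n * a) (?X ^ n) + [:of_nat n * b:]"
    by (simp add: algebra_simps)
  show "[:of_nat n:] * (smult a (?X ^ n) + [:b:]) + (- ?X) * pderiv (smult a (?X ^ n) + [:b:]) =
      [:of_nat n * b:]"
    unfolding n mult_minus_left X by simp
  show "of_nat n * b \<noteq> 0"
    using assms by simp
  show "0 < degree (pderiv (smult a (?X ^ n) + [:b:]))"
    using assms unfolding pderiv_binomial by (simp add: degree_power_eq)
qed

lemma poly_map_poly_coeff_lift_var:
  "poly (map_poly (\<lambda>a. [:a:]) f) [:0, 1:] = (f :: 'a::comm_semiring_1 poly)"
proof (induction f)
  case (pCons a f)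
  then show ?case
    by (auto simp: map_poly_pCons mult_pCons_left)
qed simp

lemma exists_binomial_osculating:
  fixes g :: "'a::field poly"
  assumes "2 \<le> n" "of_nat n \<noteq> (0::'a)" "g \<noteq> 0" "degree g \<le> n"
  obtains a b r where "a \<noteq> 0" "a \<noteq> [:coeff g n:]" "b \<noteq> 0"
    and "a * ([:0, 1:] - r) ^ n + b = g"
    and "of_nat n * a * ([:0, 1:] - r) ^ (n - 1) = pderiv g"
proof (cases "pderiv g = 0")
  case True
  have "[:0, 1:] \<noteq> [:coeff g n:]"
    by simp
  with that[of "[:0, 1:]" g "[:0, 1:]"] show ?thesis
    using assms True by (simp add: zero_power)
next
  case False
  define a where "a = smult (inverse (of_nat n)) (pderiv g)"
  have na: "of_nat n * a = pderiv g"
    using assms(2) by (simp add: a_def of_nat_poly)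
  have "a \<noteq> 0"
    using False na by auto
  have "a \<noteq> [:coeff g n:]"
  proof
    assume a: "a = [:coeff g n:]"
    then have "coeff g n \<noteq> 0"
      using \<open>a \<noteq> 0\<close> by auto
    moreover have "coeff a (n - 1) = coeff g n"
      using assms(1,2) by (simp add: a_def coeff_pderiv)
    moreover have "coeff [:coeff g n:] (n - 1) = 0"
      using assms(1) by (simp add: coeff_pCons split: nat.split)
    ultimately show False
      using a by simp
  qed
  have "degree (pderiv g) \<le> degree g - 1"
    by (rule degree_le) (auto simp: coeff_pderiv coeff_eq_0)
  moreover have "degree g \<noteq> 0"
  proof
    assume "degree g = 0"
    then obtain c where "g = [:c:]"
      by (rule degree_eq_zeroE)
    with False show False
      by (simp add: pderiv_pCons)
  qed
  ultimately have "degree a < degree g"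
    using assms(2) by (simp add: a_def)
  then have "g - a \<noteq> 0"
    by auto
  with that[OF \<open>a \<noteq> 0\<close> \<open>a \<noteq> [:coeff g n:]\<close>, of "g - a" "[:0, 1:] - 1"] show ?thesis
    by (simp add: na)
qed

lemma exists_separable_with_inseparable_shift:
  fixes u :: "nat \<Rightarrow> 'a::field"
  assumes "2 \<le> n" "of_nat n \<noteq> (0::'a)" "\<exists>i\<le>n. u i \<noteq> 0"
  obtains P :: "'a poly poly"
  where "degree P \<le> n" "coeff P n \<noteq> 0" "coeff P n \<noteq> [:u n:]"
    and "resultant P (pderiv P) \<noteq> 0"
    and "resultant (P - gen_poly n (\<lambda>i. [:u i:])) (pderiv (P - gen_poly n (\<lambda>i. [:u i:]))) = 0"
proof -
  define g where "g = gen_poly n u"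
  have "g \<noteq> 0"
    using assms(3) by (auto simp: g_def poly_eq_iff coeff_gen_poly)
  then obtain a b r where a: "a \<noteq> 0" "a \<noteq> [:u n:]" and "b \<noteq> 0"
    and osc: "a * ([:0, 1:] - r) ^ n + b = g" "of_nat n * a * ([:0, 1:] - r) ^ (n - 1) = pderiv g"
    using exists_binomial_osculating[OF assms(1,2)] degree_gen_poly_le
    by (metis coeff_gen_poly g_def order_refl)
  define P where "P = smult a ([:-r, 1:] ^ n) + [:b:]"
  define G where "G = gen_poly n (\<lambda>i. [:u i:])"
  have G: "G = map_poly (\<lambda>a. [:a:]) g"
    by (simp add: G_def g_def map_poly_gen_poly)
  have "degree P \<le> n"
    unfolding P_def using assms(1)
    by (intro degree_add_le order.trans[OF degree_smult_le])
      (simp_all add: order.trans[OF degree_power_le])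
  moreover have "coeff P n = a"
    using assms(1) lead_coeff_power[of "[:-r, 1:]" n] by (simp add: P_def degree_power_eq coeff_pCons split: nat.split)
  moreover have "resultant P (pderiv P) \<noteq> 0"
    unfolding P_def using assms(1,2) a(1) \<open>b \<noteq> 0\<close>
    by (intro resultant_pderiv_binomial_neq_0) (simp_all add: of_nat_poly)
  moreover have "resultant (P - G) (pderiv (P - G)) = 0"
  proof (rule resultant_eq_0_if_common_root)
    have "coeff (P - G) n \<noteq> 0"
      using \<open>coeff P n = a\<close> a by (simp add: G_def coeff_gen_poly)
    then show "0 < degree (P - G) + degree (pderiv (P - G))"
      using le_degree[of "P - G" n] assms(1) by linarith
    show "[:0, 1:] \<noteq> (0 :: 'a poly)"
      by simp
    show "poly (P - G) [:0, 1:] = 0"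
      using osc(1) unfolding G poly_diff poly_map_poly_coeff_lift_var by (simp add: P_def algebra_simps)
    show "poly (pderiv (P - G)) [:0, 1:] = 0"
      using osc(2)
      unfolding G P_def pderiv_diff poly_diff pderiv_binomial
        coeff_lift_hom.map_poly_pderiv[symmetric] poly_map_poly_coeff_lift_var
      by (simp add: algebra_simps)
  qed
  ultimately show ?thesis
    using that a unfolding G_def by blast
qed

theorem mainTheorem17:
  fixes p n :: nat and u :: "nat \<Rightarrow> 'a::{finite,field}"
  assumes "prime p" and "CHAR('a) = p" and "2 \<le> n" and "n < p"
    and "\<exists>i\<le>n. u i \<noteq> 0"
  shows "msubst (\<lambda>i. mvar i - mconst (u i)) (generic_disc n) \<noteq> (generic_disc n :: 'a mpoly)"
proof -
  have "of_nat n \<noteq> (0::'a)"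
    using assms(2-4) by (auto simp: of_nat_eq_0_iff_char_dvd dest: dvd_imp_le)
  moreover obtain P :: "'a poly poly"
    where "degree P \<le> n" "coeff P n \<noteq> 0" "coeff P n \<noteq> [:u n:]"
      and "resultant P (pderiv P) \<noteq> 0"
      and "resultant (P - gen_poly n (\<lambda>i. [:u i:])) (pderiv (P - gen_poly n (\<lambda>i. [:u i:]))) = 0"
    using exists_separable_with_inseparable_shift assms(3,5) calculation by blast
  ultimately show ?thesis
    using coeff_lift_hom.msubst_shift_generic_disc_neq[of n P u] by (simp add: of_nat_poly)
qed

end
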